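(* For every $n\ge1$, the following map is a bijection from $\mathrm{PST}_n$ to $\mathcal A_n$: given $t\in\mathrm{PST}_n$, delete every middle edge of $t$, delete the root of $t$ together with all edges from the root to its children, discard the isolated vertex that was the rightmost leaf of $t$, and label the remaining $n$ leaves of $t$ by $1,\dots,n$ from left to right. (The resulting components, each rooted at its topmost vertex, are binary trees forming an element of $\mathcal A_n$.)
   Context: A reduced plane tree is a rooted plane tree in which every internal node has at least two children; its weight is its number of leaves minus 1. A reduced plane tree with at least two leaves is prime if the rightmost child of its root is a leaf; $\mathrm{PST}_n$ is the set of prime reduced plane trees of weight $n$ (so with $n+1$ leaves). A middle edge of a tree is an edge from an internal vertex $v$ to a child of $v$ which is neither the leftmost nor the rightmost child of $v$. A binary tree is a plane rooted tree whose internal nodes all have exactly two children (a single leaf is allowed). A noncrossing arrangement of binary trees on $[n]$ is a set of binary trees whose leaves are labeled by $1,\dots,n$, each label used exactly once, with the leaves of each tree labeled increasingly from left to right, such that the canonical drawing (leaves placed at the points $1,\dots,n$ of a line, trees drawn above it) has no crossing, i.e. the sets of leaf labels of the trees form a noncrossing partition of $[n]$. $\mathcal A_n$ denotes the set of such arrangements. *)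

theory Defs
  imports Main
begin

datatype ptree = Nd "ptree list"

fun nleaves :: "ptree \<Rightarrow> nat" where
  "nleaves (Nd []) = 1"
| "nleaves (Nd (c # cs)) = sum_list (map nleaves (c # cs))"

fun reduced :: "ptree \<Rightarrow> bool" where
  "reduced (Nd cs) = (cs = [] \<or> (2 \<le> length cs \<and> list_all reduced cs))"

definition weight :: "ptree \<Rightarrow> nat" where
  "weight t = nleaves t - 1"

definition prime_tree :: "ptree \<Rightarrow> bool" where
  "prime_tree t = (2 \<le> nleaves t \<and> (case t of Nd cs \<Rightarrow> cs \<noteq> [] \<and> last cs = Nd []))"

definition PST :: "nat \<Rightarrow> ptree set" where
  "PST n = {t. reduced t \<and> prime_tree t \<and> weight t = n}"

datatype ltree = LLeaf nat | LNode "ltree list"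

fun lab :: "ptree \<Rightarrow> nat \<Rightarrow> ltree"
and labl :: "ptree list \<Rightarrow> nat \<Rightarrow> ltree list" where
  "lab (Nd []) k = LLeaf k"
| "lab (Nd (c # cs)) k = LNode (labl (c # cs) k)"
| "labl [] k = []"
| "labl (c # cs) k = lab c k # labl cs (k + nleaves c)"

datatype btree = BLeaf nat | BNode btree btree

fun bleaves :: "btree \<Rightarrow> nat list" where
  "bleaves (BLeaf a) = [a]"
| "bleaves (BNode l r) = bleaves l @ bleaves r"

definition arrangement :: "nat \<Rightarrow> btree set \<Rightarrow> bool" where
  "arrangement n A \<longleftrightarrow>
     (\<forall>T\<in>A. sorted_wrt (<) (bleaves T)) \<and>
     (\<Union>T\<in>A. set (bleaves T)) = {1..n} \<and>
     (\<forall>T1\<in>A. \<forall>T2\<in>A. T1 \<noteq> T2 \<longrightarrow> set (bleaves T1) \<inter> set (bleaves T2) = {}) \<and>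
     (\<forall>T1\<in>A. \<forall>T2\<in>A. T1 \<noteq> T2 \<longrightarrow>
        \<not> (\<exists>a b c d. a < b \<and> b < c \<and> c < d \<and>
              a \<in> set (bleaves T1) \<and> c \<in> set (bleaves T1) \<and>
              b \<in> set (bleaves T2) \<and> d \<in> set (bleaves T2)))"

definition Arr :: "nat \<Rightarrow> btree set set" where
  "Arr n = {A. arrangement n A}"

text \<open>spine t: the component containing the root of t after deleting all middle
  edges of t, i.e. the root with (recursively) only its leftmost and rightmost
  child kept.\<close>
fun spine :: "ltree \<Rightarrow> btree"
and lastsp :: "ltree list \<Rightarrow> btree" where
  "spine (LLeaf a) = BLeaf a"
| "spine (LNode []) = BLeaf 0"
| "spine (LNode (c # cs)) = BNode (spine c) (lastsp (c # cs))"
| "lastsp [] = BLeaf 0"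
| "lastsp [c] = spine c"
| "lastsp (c # d # cs) = lastsp (d # cs)"

text \<open>inner t: the components, other than the one containing the root of t,
  obtained by deleting all middle edges inside t.\<close>
fun inner :: "ltree \<Rightarrow> btree set"
and innerl :: "ltree list \<Rightarrow> btree set" where
  "inner (LLeaf a) = {}"
| "inner (LNode cs) = innerl cs \<union> set (map spine (butlast (tl cs)))"
| "innerl [] = {}"
| "innerl (c # cs) = inner c \<union> innerl cs"

text \<open>Leaves labelled 1,2,... from left to right; the root's children other than
  the rightmost one each give a family of components; the rightmost child
  (a leaf, labelled n+1) is discarded.\<close>
definition phi :: "ptree \<Rightarrow> btree set" where
  "phi t = (case lab t 1 of
              LLeaf _ \<Rightarrow> {}
            | LNode ls \<Rightarrow> (\<Union>c\<in>set (butlast ls). insert (spine c) (inner c)))"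

end

theory Submission
  imports Defs
begin

text \<open>Label the leaves of a reduced tree c by k, k+1, ... from left to right and delete its
  middle edges. The components form a noncrossing family of binary trees covering the interval
  of labels, and the root component contains its first and its last label. Conversely every such
  family comes from exactly one reduced tree: the root component is BNode L R, where L and R are
  the root components of the leftmost and rightmost child, and replacing it by L and R gives the
  family of the forest of children. A noncrossing family on an interval splits into consecutive
  blocks, the first block ending at the largest leaf of the tree through the first point, so
  both directions follow by induction on the number of leaves. For a prime tree, deleting the
  root and its rightmost leaf leaves exactly the forest of the remaining children.\<close>

definition leafset :: "btree \<Rightarrow> nat set" where
  "leafset T = set (bleaves T)"

definition support :: "btree set \<Rightarrow> nat set" where
  "support A = (\<Union>T\<in>A. leafset T)"

definition crossing :: "nat set \<Rightarrow> nat set \<Rightarrow> bool" where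
  "crossing X Y \<longleftrightarrow> (\<exists>a b c d. a < b \<and> b < c \<and> c < d \<and> a \<in> X \<and> c \<in> X \<and> b \<in> Y \<and> d \<in> Y)"

definition separated :: "btree \<Rightarrow> btree \<Rightarrow> bool" where
  "separated T1 T2 \<longleftrightarrow> leafset T1 \<inter> leafset T2 = {} \<and>
     \<not> crossing (leafset T1) (leafset T2) \<and> \<not> crossing (leafset T2) (leafset T1)"

definition noncrossing :: "btree set \<Rightarrow> bool" where
  "noncrossing A \<longleftrightarrow> (\<forall>T\<in>A. sorted_wrt (<) (bleaves T)) \<and> pairwise separated A"

lemma pairwise_separated_iff:
  "pairwise separated A \<longleftrightarrow>
     (\<forall>T1\<in>A. \<forall>T2\<in>A. T1 \<noteq> T2 \<longrightarrow> leafset T1 \<inter> leafset T2 = {} \<and> \<not> crossing (leafset T1) (leafset T2))"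
    (is "_ \<longleftrightarrow> ?oneway")
proof
  show "?oneway" if "pairwise separated A"
    using that unfolding pairwise_def separated_def by simp
next
  assume H: ?oneway
  show "pairwise separated A"
    unfolding pairwise_def
  proof (intro ballI impI)
    fix T1 T2 assume "T1 \<in> A" "T2 \<in> A" "T1 \<noteq> T2"
    then show "separated T1 T2"
      using H[rule_format, of T1 T2] H[rule_format, of T2 T1] unfolding separated_def by simp
  qed
qed

lemma arrangement_iff_noncrossing: "arrangement n A \<longleftrightarrow> noncrossing A \<and> support A = {1..n}"
  unfolding arrangement_def noncrossing_def pairwise_separated_iff support_def leafset_def crossing_def
  by blast

lemma leafset_simps [simp]:
  "leafset (BLeaf a) = {a}" "leafset (BNode L R) = leafset L \<union> leafset R"
  by (auto simp: leafset_def)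

lemma leafset_nonempty [simp]: "leafset T \<noteq> {}"
  by (induction T) auto

lemma finite_leafset [simp]: "finite (leafset T)"
  by (simp add: leafset_def)

lemma support_simps [simp]:
  "support {} = {}" "support (insert T A) = leafset T \<union> support A"
  "support (A \<union> B) = support A \<union> support B"
  by (auto simp: support_def)

lemma leafset_subset_support: "T \<in> A \<Longrightarrow> leafset T \<subseteq> support A"
  by (auto simp: support_def)

lemma support_restrict:
  assumes "\<forall>T\<in>A. leafset T \<subseteq> J \<or> leafset T \<inter> J = {}"
  shows "support {T\<in>A. leafset T \<subseteq> J} = support A \<inter> J"
  using assms by (auto simp: support_def)

lemma disjoint_if_supports_disjoint:
  assumes "support A \<inter> support B = {}"
  shows "A \<inter> B = {}"
proof (rule ccontr)
  assume "A \<inter> B \<noteq> {}"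
  then obtain T where "T \<in> A" "T \<in> B" by blast
  then have "leafset T \<subseteq> support A \<inter> support B"
    using leafset_subset_support by blast
  with assms show False by simp
qed

lemma restrict_to_support:
  assumes "support A \<subseteq> I" "support B \<inter> I = {}"
  shows "{T\<in>A \<union> B. leafset T \<subseteq> I} = A"
proof -
  have "\<not> leafset T \<subseteq> I" if "T \<in> B" for T
  proof
    assume "leafset T \<subseteq> I"
    then have "leafset T \<subseteq> support B \<inter> I"
      using leafset_subset_support[OF that] by blast
    with assms(2) show False by simp
  qed
  moreover have "leafset T \<subseteq> I" if "T \<in> A" for T
    using leafset_subset_support[OF that] assms(1) by blast
  ultimately show ?thesis by blast
qed

lemma union_eq_union_separated:
  assumes "A \<union> B = A' \<union> B'" "support A \<subseteq> I" "support A' \<subseteq> I"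
    "support B \<inter> I = {}" "support B' \<inter> I = {}"
  shows "A = A'" "B = B'"
proof -
  show "A = A'"
    using restrict_to_support[OF assms(2,4)] restrict_to_support[OF assms(3,5)] assms(1) by simp
  moreover have "A \<inter> B = {}" "A' \<inter> B' = {}"
    using assms(2-5) disjoint_if_supports_disjoint by blast+
  ultimately show "B = B'"
    using assms(1) by blast
qed

lemma sorted_BNode_iff:
  "sorted_wrt (<) (bleaves (BNode L R)) \<longleftrightarrow> sorted_wrt (<) (bleaves L) \<and> sorted_wrt (<) (bleaves R) \<and>
     (\<forall>a\<in>leafset L. \<forall>b\<in>leafset R. a < b)"
  by (auto simp: sorted_wrt_append leafset_def)

lemma crossingI:
  "a < b \<Longrightarrow> b < c \<Longrightarrow> c < d \<Longrightarrow> a \<in> X \<Longrightarrow> c \<in> X \<Longrightarrow> b \<in> Y \<Longrightarrow> d \<in> Y \<Longrightarrow> crossing X Y"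
  unfolding crossing_def by blast

lemma separated_commute: "separated T1 T2 \<longleftrightarrow> separated T2 T1"
  unfolding separated_def by blast

lemma separated_if_ordered:
  assumes "\<And>a b. a \<in> leafset T1 \<Longrightarrow> b \<in> leafset T2 \<Longrightarrow> a < b"
  shows "separated T1 T2"
  using assms unfolding separated_def crossing_def by (blast dest: less_asym)

lemma separated_mono: "separated T1 T2 \<Longrightarrow> leafset T \<subseteq> leafset T1 \<Longrightarrow> separated T T2"
  unfolding separated_def crossing_def by blast

lemma noncrossing_subset: "noncrossing A \<Longrightarrow> B \<subseteq> A \<Longrightarrow> noncrossing B"
  unfolding noncrossing_def by (meson pairwise_subset subsetD)

lemma noncrossing_sorted: "noncrossing A \<Longrightarrow> T \<in> A \<Longrightarrow> sorted_wrt (<) (bleaves T)"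
  unfolding noncrossing_def by blast

lemma noncrossing_separated: "noncrossing A \<Longrightarrow> T1 \<in> A \<Longrightarrow> T2 \<in> A \<Longrightarrow> T1 \<noteq> T2 \<Longrightarrow> separated T1 T2"
  unfolding noncrossing_def pairwise_def by blast

lemma noncrossing_disjoint:
  "noncrossing A \<Longrightarrow> T1 \<in> A \<Longrightarrow> T2 \<in> A \<Longrightarrow> T1 \<noteq> T2 \<Longrightarrow> leafset T1 \<inter> leafset T2 = {}"
  using noncrossing_separated unfolding separated_def by blast

lemma noncrossing_unique:
  "noncrossing A \<Longrightarrow> T1 \<in> A \<Longrightarrow> T2 \<in> A \<Longrightarrow> a \<in> leafset T1 \<Longrightarrow> a \<in> leafset T2 \<Longrightarrow> T1 = T2"
  using noncrossing_disjoint by blast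

lemma noncrossing_insert_iff:
  "noncrossing (insert N A) \<longleftrightarrow>
     sorted_wrt (<) (bleaves N) \<and> (\<forall>T\<in>A. T \<noteq> N \<longrightarrow> separated N T) \<and> noncrossing A"
  unfolding noncrossing_def pairwise_insert by (auto simp: separated_commute)

lemma noncrossing_union:
  assumes "noncrossing A" "noncrossing B" "\<And>a b. a \<in> support A \<Longrightarrow> b \<in> support B \<Longrightarrow> a < b"
  shows "noncrossing (A \<union> B)"
proof -
  have AB: "separated T1 T2" if "T1 \<in> A" "T2 \<in> B" for T1 T2
    using assms(3) leafset_subset_support[OF that(1)] leafset_subset_support[OF that(2)]
    by (intro separated_if_ordered) blast
  have "separated T1 T2" if T: "T1 \<in> A \<union> B" "T2 \<in> A \<union> B" "T1 \<noteq> T2" for T1 T2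
  proof -
    consider "T1 \<in> A" "T2 \<in> A" | "T1 \<in> A" "T2 \<in> B" | "T1 \<in> B" "T2 \<in> A" | "T1 \<in> B" "T2 \<in> B"
      using T(1,2) by blast
    then show ?thesis
    proof cases
      case 3
      then show ?thesis using AB separated_commute by blast
    qed (use AB noncrossing_separated assms(1,2) T(3) in blast)+
  qed
  moreover have "\<forall>T\<in>A \<union> B. sorted_wrt (<) (bleaves T)"
    using assms(1,2) noncrossing_sorted by blast
  ultimately show ?thesis
    unfolding noncrossing_def pairwise_def by blast
qed

lemma noncrossing_nested:
  assumes "noncrossing A" "T0 \<in> A" "T \<in> A" "T \<noteq> T0"
    and "a \<in> leafset T0" "c \<in> leafset T0" "b \<in> leafset T" "a < b" "b < c"
  shows "leafset T \<subseteq> {a<..<c}"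
proof
  fix v assume v: "v \<in> leafset T"
  have "separated T0 T"
    using assms(1-4) noncrossing_separated by blast
  then have "v \<notin> leafset T0" "\<not> (v < a)" "\<not> (c < v)"
    using assms(5-) v unfolding separated_def crossing_def by blast+
  with assms(5,6) show "v \<in> {a<..<c}"
    by (metis greaterThanLessThan_iff not_less_iff_gr_or_eq)
qed

lemma noncrossing_split:
  assumes "noncrossing A" "BNode L R \<in> A"
  shows "noncrossing (insert L (insert R (A - {BNode L R})))"
proof -
  have sorted: "sorted_wrt (<) (bleaves L)" "sorted_wrt (<) (bleaves R)"
    and ordered: "\<And>a b. a \<in> leafset L \<Longrightarrow> b \<in> leafset R \<Longrightarrow> a < b"
    using noncrossing_sorted[OF assms] unfolding sorted_BNode_iff by auto
  have "separated L T" "separated R T" if "T \<in> A - {BNode L R}" for T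
  proof -
    have "separated (BNode L R) T"
      using noncrossing_separated[OF assms(1,2)] that by auto
    then show "separated L T" "separated R T"
      using separated_mono by fastforce+
  qed
  moreover have "noncrossing (A - {BNode L R})"
    using assms(1) noncrossing_subset by blast
  ultimately show ?thesis
    using sorted separated_if_ordered[OF ordered] by (auto simp: noncrossing_insert_iff)
qed

lemma noncrossing_subtrees_notin:
  assumes "noncrossing A" "BNode L R \<in> A"
  shows "L \<notin> A" "R \<notin> A"
proof -
  obtain a b where "a \<in> leafset L" "b \<in> leafset R"
    using leafset_nonempty by blast
  moreover have "L \<noteq> BNode L R" "R \<noteq> BNode L R"
    by (induction L; induction R; simp)+
  ultimately show "L \<notin> A" "R \<notin> A"
    using noncrossing_unique[OF assms(1) _ assms(2)] by fastforce+
qed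

lemma crossing_union_left:
  assumes cr: "crossing (X \<union> Y) Z" and disj: "Z \<inter> X = {}" "Z \<inter> Y = {}"
    and x: "x \<in> X" "X \<subseteq> {..x}" and y: "y \<in> Y" "Y \<subseteq> {y..}" "x < y"
    and Z: "Z \<subseteq> {x<..<y} \<or> Z \<inter> {x<..<y} = {}"
  shows "crossing X Z \<or> crossing Y Z"
proof -
  obtain a b c d where abcd: "a < b" "b < c" "c < d" "a \<in> X \<union> Y" "c \<in> X \<union> Y" "b \<in> Z" "d \<in> Z"
    using cr unfolding crossing_def by blast
  consider "a \<in> X" "c \<in> X" | "a \<in> Y" "c \<in> Y" | "a \<in> X" "c \<in> Y" | "a \<in> Y" "c \<in> X"
    using abcd(4,5) by blast
  then show ?thesis
  proof cases
    case 3
    then have "y < d" using abcd(3) y(2) by auto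
    then have "b \<notin> {x<..<y}" using Z abcd(6,7) by auto
    moreover have "b \<noteq> x" "b \<noteq> y" using disj x(1) y(1) abcd(6) by blast+
    ultimately consider "b < x" | "y < b" by fastforce
    then show ?thesis
    proof cases
      case 1
      then show ?thesis using crossingI[OF abcd(1) 1 _ 3(1) x(1) abcd(6,7)] \<open>y < d\<close> y(3) by simp
    next
      case 2
      then show ?thesis using crossingI[OF 2 abcd(2,3) y(1) 3(2) abcd(6,7)] by simp
    qed
  next
    case 4
    then show ?thesis using abcd(1,2) x(2) y(2,3) by fastforce
  qed (use crossingI abcd in blast)+
qed

lemma crossing_union_right:
  assumes cr: "crossing Z (X \<union> Y)" and disj: "Z \<inter> X = {}" "Z \<inter> Y = {}"
    and x: "x \<in> X" "X \<subseteq> {..x}" and y: "y \<in> Y" "Y \<subseteq> {y..}" "x < y"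
    and Z: "Z \<subseteq> {x<..<y} \<or> Z \<inter> {x<..<y} = {}"
  shows "crossing Z X \<or> crossing Z Y"
proof -
  obtain a b c d where abcd: "a < b" "b < c" "c < d" "a \<in> Z" "c \<in> Z" "b \<in> X \<union> Y" "d \<in> X \<union> Y"
    using cr unfolding crossing_def by blast
  consider "b \<in> X" "d \<in> X" | "b \<in> Y" "d \<in> Y" | "b \<in> X" "d \<in> Y" | "b \<in> Y" "d \<in> X"
    using abcd(6,7) by blast
  then show ?thesis
  proof cases
    case 3
    then have "a < x" using abcd(1) x(2) by auto
    then have "c \<notin> {x<..<y}" using Z abcd(4,5) by auto
    moreover have "c \<noteq> x" "c \<noteq> y" using disj x(1) y(1) abcd(5) by blast+
    ultimately consider "c < x" | "y < c" by fastforce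
    then show ?thesis
    proof cases
      case 1
      then show ?thesis using crossingI[OF abcd(1,2) 1 abcd(4,5) 3(1) x(1)] by simp
    next
      case 2
      then show ?thesis using crossingI[OF _ 2 abcd(3,4,5) y(1) 3(2)] \<open>a < x\<close> y(3) by simp
    qed
  next
    case 4
    then show ?thesis using abcd(2,3) x(2) y(2,3) by fastforce
  qed (use crossingI abcd in blast)+
qed

lemma separated_BNode:
  assumes sep: "separated L T" "separated R T"
    and x: "x \<in> leafset L" "leafset L \<subseteq> {..x}" and y: "y \<in> leafset R" "leafset R \<subseteq> {y..}" "x < y"
    and T: "leafset T \<subseteq> {x<..<y} \<or> leafset T \<inter> {x<..<y} = {}"
  shows "separated (BNode L R) T"
proof -
  have disj: "leafset T \<inter> leafset L = {}" "leafset T \<inter> leafset R = {}"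
    using sep unfolding separated_def by auto
  show ?thesis
    using sep crossing_union_left[OF _ disj x y T] crossing_union_right[OF _ disj x y T] disj
    unfolding separated_def by auto
qed

lemma noncrossing_join:
  assumes nc: "noncrossing (insert L (insert R B))" "L \<notin> B" "R \<notin> B"
    and x: "x \<in> leafset L" "leafset L \<subseteq> {..x}" and y: "y \<in> leafset R" "leafset R \<subseteq> {y..}" "x < y"
    and B: "\<forall>T\<in>B. leafset T \<subseteq> {x<..<y} \<or> leafset T \<inter> {x<..<y} = {}"
  shows "noncrossing (insert (BNode L R) B)" "BNode L R \<notin> B"
proof -
  have "a < b" if "a \<in> leafset L" "b \<in> leafset R" for a b
    using that x(2) y(2,3) by fastforce
  with nc(1) have "sorted_wrt (<) (bleaves (BNode L R))"
    unfolding sorted_BNode_iff using noncrossing_sorted by blast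
  moreover have "separated (BNode L R) T" if "T \<in> B" for T
  proof (rule separated_BNode[OF _ _ x y])
    show "separated L T" "separated R T"
      using noncrossing_separated[OF nc(1)] nc(2,3) that by auto
    show "leafset T \<subseteq> {x<..<y} \<or> leafset T \<inter> {x<..<y} = {}"
      using B that by blast
  qed
  moreover have "noncrossing B"
    using nc(1) noncrossing_subset by blast
  ultimately show nc_join: "noncrossing (insert (BNode L R) B)"
    unfolding noncrossing_insert_iff by blast
  show "BNode L R \<notin> B"
  proof
    assume "BNode L R \<in> B"
    then have "L \<notin> insert L (insert R B)"
      using noncrossing_subtrees_notin(1)[OF nc(1)] by blast
    then show False by simp
  qed
qed

lemma noncrossing_join_blocks:
  assumes nc: "noncrossing (A1 \<union> A2 \<union> A3)"
    and supp: "support A1 = {k..<k1}" "support A2 \<subseteq> {k1..<k2}" "support A3 = {k2..<e}" "k1 \<le> k2"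
    and L: "L \<in> A1" "k1 - 1 \<in> leafset L" and R: "R \<in> A3" "k2 \<in> leafset R"
  defines "B \<equiv> A1 - {L} \<union> A2 \<union> (A3 - {R})"
  shows "noncrossing (insert (BNode L R) B)" "BNode L R \<notin> B"
proof -
  have pos1: "leafset T \<subseteq> {..<k1}" if "T \<in> A1" for T
    using leafset_subset_support[OF that] supp(1) by auto
  have pos2: "leafset T \<subseteq> {k1..<k2}" if "T \<in> A2" for T
    using leafset_subset_support[OF that] supp(2) by auto
  have pos3: "leafset T \<subseteq> {k2..}" if "T \<in> A3" for T
    using leafset_subset_support[OF that] supp(3) by auto
  have "k1 - 1 < k1"
    using pos1[OF L(1)] L(2) by auto
  have "L \<notin> A2 \<union> A3"
    using pos2 pos3 L(2) supp(4) \<open>k1 - 1 < k1\<close> by fastforce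
  then have "L \<notin> B"
    unfolding B_def by blast
  moreover have "R \<notin> A1 \<union> A2"
    using pos1 pos2 R(2) supp(4) by fastforce
  then have "R \<notin> B"
    unfolding B_def by blast
  moreover have "insert L (insert R B) = A1 \<union> A2 \<union> A3"
    using L(1) R(1) unfolding B_def by blast
  moreover have "leafset T \<subseteq> {k1 - 1<..<k2} \<or> leafset T \<inter> {k1 - 1<..<k2} = {}" if "T \<in> B" for T
  proof -
    have "leafset T \<subseteq> {..<k1} \<or> leafset T \<subseteq> {k1..<k2} \<or> leafset T \<subseteq> {k2..}"
      using that pos1 pos2 pos3 unfolding B_def by blast
    moreover have "{..<k1} \<inter> {k1 - 1<..<k2} = {}" "{k2..} \<inter> {k1 - 1<..<k2} = {}"
      "{k1..<k2} \<subseteq> {k1 - 1<..<k2}"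
      using \<open>k1 - 1 < k1\<close> by auto
    ultimately show ?thesis
      by blast
  qed
  moreover have "leafset L \<subseteq> {..k1 - 1}" "leafset R \<subseteq> {k2..}"
    using pos1[OF L(1)] pos3[OF R(1)] by (auto simp: subset_iff)
  ultimately show "noncrossing (insert (BNode L R) B)" "BNode L R \<notin> B"
    using noncrossing_join[OF _ _ _ L(2) _ R(2)] nc \<open>k1 - 1 < k1\<close> supp(4) by auto
qed

lemma noncrossing_first_block:
  assumes nc: "noncrossing A" and supp: "support A = {k..<k + N}"
    and T0: "T0 \<in> A" "k \<in> leafset T0" and M: "M = Max (leafset T0)"
  shows "\<forall>T\<in>A. leafset T \<subseteq> {k..M} \<or> leafset T \<subseteq> {M<..}"
proof
  fix T assume T: "T \<in> A"
  have M_in: "M \<in> leafset T0" and M_max: "\<And>v. v \<in> leafset T0 \<Longrightarrow> v \<le> M"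
    unfolding M by simp_all
  have above_k: "\<And>v. v \<in> leafset T \<Longrightarrow> k \<le> v"
    using leafset_subset_support[OF T] supp by auto
  show "leafset T \<subseteq> {k..M} \<or> leafset T \<subseteq> {M<..}"
  proof (cases "T = T0")
    case True
    then show ?thesis using M_max above_k by auto
  next
    case False
    have disj: "leafset T \<inter> leafset T0 = {}"
      using noncrossing_disjoint[OF nc T T0(1) False] .
    show ?thesis
    proof (cases "\<exists>v\<in>leafset T. v < M")
      case True
      then obtain v where v: "v \<in> leafset T" "v < M" by blast
      have "k < v"
        using above_k[OF v(1)] disj v(1) T0(2) by (metis disjoint_iff le_neq_implies_less)
      then have "leafset T \<subseteq> {k<..<M}"
        using noncrossing_nested[OF nc T0(1) T False T0(2) M_in v(1)] v(2) by blast
      then show ?thesis by auto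
    next
      case False
      have "v \<noteq> M" if "v \<in> leafset T" for v
        using disj M_in that by blast
      with False show ?thesis by fastforce
    qed
  qed
qed

lemma noncrossing_first_block_split:
  assumes nc: "noncrossing A" and supp: "support A = {k..<k + N}"
    and T0: "T0 \<in> A" "k \<in> leafset T0" and M: "M = Max (leafset T0)"
  shows "A = {T\<in>A. leafset T \<subseteq> {k..M}} \<union> {T\<in>A. leafset T \<subseteq> {M<..}}"
    "support {T\<in>A. leafset T \<subseteq> {k..M}} = {k..<M + 1}"
    "support {T\<in>A. leafset T \<subseteq> {M<..}} = {M + 1..<k + N}"
    "k \<le> M" "M < k + N"
proof -
  have dich: "\<forall>T\<in>A. leafset T \<subseteq> {k..M} \<or> leafset T \<subseteq> {M<..}"
    using noncrossing_first_block[OF assms] .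
  then show "A = {T\<in>A. leafset T \<subseteq> {k..M}} \<union> {T\<in>A. leafset T \<subseteq> {M<..}}"
    by blast
  have "M \<in> leafset T0"
    using M by simp
  then show "k \<le> M" "M < k + N"
    using leafset_subset_support[OF T0(1)] supp by auto
  have "\<forall>T\<in>A. leafset T \<subseteq> {k..M} \<or> leafset T \<inter> {k..M} = {}"
    using dich by (force simp: subset_iff)
  from support_restrict[OF this] show "support {T\<in>A. leafset T \<subseteq> {k..M}} = {k..<M + 1}"
    using supp \<open>M < k + N\<close> by auto
  have "\<forall>T\<in>A. leafset T \<subseteq> {M<..} \<or> leafset T \<inter> {M<..} = {}"
    using dich by (force simp: subset_iff)
  from support_restrict[OF this] show "support {T\<in>A. leafset T \<subseteq> {M<..}} = {M + 1..<k + N}"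
    using supp \<open>k \<le> M\<close> by auto
qed

definition nleavesl :: "ptree list \<Rightarrow> nat" where
  "nleavesl cs = sum_list (map nleaves cs)"

lemma nleavesl_simps [simp]:
  "nleavesl [] = 0" "nleavesl (c # cs) = nleaves c + nleavesl cs"
  "nleavesl (cs @ ds) = nleavesl cs + nleavesl ds"
  by (simp_all add: nleavesl_def)

lemma nleaves_Nd: "cs \<noteq> [] \<Longrightarrow> nleaves (Nd cs) = nleavesl cs"
  by (cases cs) (simp_all add: nleavesl_def)

lemma nleaves_pos: "0 < nleaves t"
proof (induction t)
  case (Nd cs)
  then show ?case by (cases cs) (simp_all add: nleavesl_def[symmetric])
qed

lemma reduced_Nd_iff:
  "reduced (Nd cs) \<longleftrightarrow> cs = [] \<or> (\<exists>c1 mids cm. cs = c1 # mids @ [cm] \<and> (\<forall>c\<in>set cs. reduced c))"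
proof -
  have "2 \<le> length cs \<longleftrightarrow> (\<exists>c1 mids cm. cs = c1 # mids @ [cm])"
  proof
    assume "2 \<le> length cs"
    then obtain c1 rest where "cs = c1 # rest" "rest \<noteq> []"
      by (cases cs) (auto simp: Suc_le_length_iff)
    then show "\<exists>c1 mids cm. cs = c1 # mids @ [cm]"
      by (metis append_butlast_last_id)
  qed auto
  then show ?thesis
    by (auto simp: list_all_iff)
qed

lemma lab_Nd: "cs \<noteq> [] \<Longrightarrow> lab (Nd cs) k = LNode (labl cs k)"
  by (cases cs) simp_all

lemma labl_append: "labl (cs @ ds) k = labl cs k @ labl ds (k + nleavesl cs)"
  by (induction cs arbitrary: k) (simp_all add: add.assoc)

lemma lastsp_eq_spine_last: "xs \<noteq> [] \<Longrightarrow> lastsp xs = spine (last xs)"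
proof (induction xs)
  case (Cons x xs)
  then show ?case by (cases xs) simp_all
qed simp

lemma innerl_eq: "innerl xs = (\<Union>x\<in>set xs. inner x)"
  by (induction xs) simp_all

definition root_comp :: "ptree \<Rightarrow> nat \<Rightarrow> btree" where
  "root_comp c k = spine (lab c k)"

definition inner_comps :: "ptree \<Rightarrow> nat \<Rightarrow> btree set" where
  "inner_comps c k = inner (lab c k)"

definition comps :: "ptree \<Rightarrow> nat \<Rightarrow> btree set" where
  "comps c k = insert (root_comp c k) (inner_comps c k)"

fun forest_comps :: "ptree list \<Rightarrow> nat \<Rightarrow> btree set" where
  "forest_comps [] k = {}"
| "forest_comps (c # cs) k = comps c k \<union> forest_comps cs (k + nleaves c)"

lemma forest_comps_eq: "forest_comps cs k = (\<Union>x\<in>set (labl cs k). insert (spine x) (inner x))"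
  by (induction cs arbitrary: k) (auto simp: comps_def root_comp_def inner_comps_def)

lemma forest_comps_append:
  "forest_comps (cs @ ds) k = forest_comps cs k \<union> forest_comps ds (k + nleavesl cs)"
  by (induction cs arbitrary: k) (simp_all add: Un_assoc add.assoc)

lemma comps_leaf [simp]:
  "root_comp (Nd []) k = BLeaf k" "inner_comps (Nd []) k = {}" "comps (Nd []) k = {BLeaf k}"
  by (simp_all add: comps_def root_comp_def inner_comps_def)

lemma root_comp_Nd_not_leaf: "cs \<noteq> [] \<Longrightarrow> root_comp (Nd cs) k \<noteq> BLeaf a"
  by (cases cs) (simp_all add: root_comp_def)

lemma lab_Nd_children:
  "lab (Nd (c1 # mids @ [cm])) k =
     LNode (lab c1 k # labl mids (k + nleaves c1) @ [lab cm (k + nleavesl (c1 # mids))])"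
  by (simp add: labl_append add.assoc)

lemma root_comp_Nd:
  "root_comp (Nd (c1 # mids @ [cm])) k = BNode (root_comp c1 k) (root_comp cm (k + nleavesl (c1 # mids)))"
  unfolding root_comp_def lab_Nd_children by (simp add: lastsp_eq_spine_last)

lemma inner_comps_Nd:
  "inner_comps (Nd (c1 # mids @ [cm])) k =
     inner_comps c1 k \<union> forest_comps mids (k + nleaves c1) \<union> inner_comps cm (k + nleavesl (c1 # mids))"
  unfolding inner_comps_def lab_Nd_children forest_comps_eq by (auto simp: innerl_eq)

lemma forest_comps_children:
  "forest_comps (c1 # mids @ [cm]) k =
     insert (root_comp c1 k) (insert (root_comp cm (k + nleavesl (c1 # mids))) (inner_comps (Nd (c1 # mids @ [cm])) k))"
  unfolding inner_comps_Nd by (auto simp: forest_comps_append comps_def add.assoc)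

lemma phi_eq_forest_comps: "phi (Nd (cs @ [Nd []])) = forest_comps cs 1"
  unfolding phi_def forest_comps_eq by (simp add: lab_Nd labl_append)

definition comps_invariant :: "ptree \<Rightarrow> nat \<Rightarrow> bool" where
  "comps_invariant c k \<longleftrightarrow> noncrossing (comps c k) \<and> support (comps c k) = {k..<k + nleaves c} \<and>
     k \<in> leafset (root_comp c k) \<and> k + nleaves c - 1 \<in> leafset (root_comp c k) \<and>
     root_comp c k \<notin> inner_comps c k"

lemma forest_comps_invariant:
  assumes "\<And>c k. c \<in> set cs \<Longrightarrow> comps_invariant c k"
  shows "noncrossing (forest_comps cs k) \<and> support (forest_comps cs k) = {k..<k + nleavesl cs}"
  using assms
proof (induction cs arbitrary: k)
  case Nil
  then show ?case by (simp add: noncrossing_def)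
next
  case (Cons c cs)
  let ?k' = "k + nleaves c"
  have IH: "noncrossing (forest_comps cs ?k')" "support (forest_comps cs ?k') = {?k'..<?k' + nleavesl cs}"
    using Cons by auto
  have c: "noncrossing (comps c k)" "support (comps c k) = {k..<?k'}"
    using Cons.prems[of c k] by (auto simp: comps_invariant_def)
  have "noncrossing (comps c k \<union> forest_comps cs ?k')"
    by (rule noncrossing_union) (use c IH in auto)
  moreover have "support (comps c k \<union> forest_comps cs ?k') = {k..<k + nleavesl (c # cs)}"
    using c IH by auto
  ultimately show ?case by simp
qed

lemma comps_invariant_Nd:
  assumes inv: "\<And>c k. c \<in> set (c1 # mids @ [cm]) \<Longrightarrow> comps_invariant c k"
  shows "comps_invariant (Nd (c1 # mids @ [cm])) k"
proof -
  define k1 k2 e where "k1 = k + nleaves c1" and "k2 = k1 + nleavesl mids" and "e = k2 + nleaves cm"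
  define L R where "L = root_comp c1 k" and "R = root_comp cm k2"
  define B where "B = comps c1 k - {L} \<union> forest_comps mids k1 \<union> (comps cm k2 - {R})"
  have k2_eq: "k + nleavesl (c1 # mids) = k2"
    by (simp add: k1_def k2_def)
  have "forest_comps (c1 # mids @ [cm]) k = comps c1 k \<union> forest_comps mids k1 \<union> comps cm k2"
    by (simp add: forest_comps_append k1_def k2_def add.assoc Un_assoc)
  moreover have "k + nleavesl (c1 # mids @ [cm]) = e"
    by (simp add: e_def k2_def k1_def)
  ultimately have F: "noncrossing (comps c1 k \<union> forest_comps mids k1 \<union> comps cm k2)"
    "support (comps c1 k \<union> forest_comps mids k1 \<union> comps cm k2) = {k..<e}"
    using forest_comps_invariant[of "c1 # mids @ [cm]" k, OF inv] by simp_all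
  have c1: "support (comps c1 k) = {k..<k1}" "k \<in> leafset L" "k1 - 1 \<in> leafset L"
    "L \<notin> inner_comps c1 k"
    using inv[of c1 k] by (simp_all add: comps_invariant_def L_def k1_def)
  have cm: "support (comps cm k2) = {k2..<e}" "k2 \<in> leafset R" "e - 1 \<in> leafset R"
    "R \<notin> inner_comps cm k2"
    using inv[of cm k2] by (simp_all add: comps_invariant_def R_def e_def)
  have mids: "support (forest_comps mids k1) = {k1..<k2}"
    using forest_comps_invariant[of mids k1] inv by (simp add: k2_def)
  have join: "noncrossing (insert (BNode L R) B)" "BNode L R \<notin> B"
    using noncrossing_join_blocks[OF F(1) c1(1) _ cm(1) _ _ c1(3) _ cm(2)] mids
    unfolding B_def L_def R_def by (simp_all add: comps_def k2_def)
  have "B = inner_comps (Nd (c1 # mids @ [cm])) k"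
    using c1(4) cm(4) unfolding B_def inner_comps_Nd k2_eq k1_def[symmetric] L_def R_def comps_def by auto
  moreover have "root_comp (Nd (c1 # mids @ [cm])) k = BNode L R"
    unfolding root_comp_Nd k2_eq L_def R_def ..
  moreover have "support (insert (BNode L R) B) = {k..<e}"
  proof -
    have "L \<in> comps c1 k" "R \<in> comps cm k2"
      by (simp_all add: comps_def L_def R_def)
    then have "insert L (insert R B) = comps c1 k \<union> forest_comps mids k1 \<union> comps cm k2"
      unfolding B_def by blast
    moreover have "support (insert (BNode L R) B) = support (insert L (insert R B))"
      by (simp add: Un_assoc)
    ultimately show ?thesis
      using F(2) by (simp only:)
  qed
  moreover have "k + nleaves (Nd (c1 # mids @ [cm])) = e"
    by (subst nleaves_Nd) (simp_all add: e_def k2_def k1_def)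
  ultimately show ?thesis
    using join c1(2) cm(3) unfolding comps_invariant_def comps_def by simp
qed

lemma reduced_comps_invariant: "reduced c \<Longrightarrow> comps_invariant c k"
proof (induction c arbitrary: k)
  case (Nd cs)
  show ?case
  proof (cases "cs = []")
    case True
    then show ?thesis by (simp add: comps_invariant_def noncrossing_def)
  next
    case False
    then obtain c1 mids cm where "cs = c1 # mids @ [cm]" "\<forall>c\<in>set cs. reduced c"
      using Nd.prems reduced_Nd_iff by blast
    with Nd.IH show ?thesis
      using comps_invariant_Nd by blast
  qed
qed

lemma reduced_forest_comps:
  assumes "\<forall>c\<in>set cs. reduced c"
  shows "noncrossing (forest_comps cs k)" "support (forest_comps cs k) = {k..<k + nleavesl cs}"
  using forest_comps_invariant[of cs k] assms reduced_comps_invariant by blast+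

lemma Max_root_comp:
  assumes "reduced c"
  shows "Max (leafset (root_comp c k)) = k + nleaves c - 1"
proof (rule Max_eqI)
  have "leafset (root_comp c k) \<subseteq> {k..<k + nleaves c}"
    using reduced_comps_invariant[OF assms, of k] unfolding comps_invariant_def comps_def by auto
  then show "y \<le> k + nleaves c - 1" if "y \<in> leafset (root_comp c k)" for y
    using that by fastforce
  show "k + nleaves c - 1 \<in> leafset (root_comp c k)"
    using reduced_comps_invariant[OF assms, of k] unfolding comps_invariant_def by blast
qed simp

lemma root_comp_first_leaf: "reduced c \<Longrightarrow> k \<in> leafset (root_comp c k)"
  and root_comp_last_leaf: "reduced c \<Longrightarrow> k + nleaves c - 1 \<in> leafset (root_comp c k)"
  and noncrossing_comps: "reduced c \<Longrightarrow> noncrossing (comps c k)"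
  using reduced_comps_invariant[of c k] unfolding comps_invariant_def by blast+

lemma forest_comps_injI:
  assumes "\<And>c c' k. c \<in> set cs \<Longrightarrow> reduced c' \<Longrightarrow> comps c k = comps c' k \<Longrightarrow> c = c'"
    and "\<forall>c\<in>set cs. reduced c" "\<forall>c\<in>set cs'. reduced c"
    and "forest_comps cs k = forest_comps cs' k"
  shows "cs = cs'"
  using assms
proof (induction cs arbitrary: cs' k)
  case Nil
  then show ?case by (cases cs') (auto simp: comps_def)
next
  case (Cons c cs)
  then obtain c' cs'' where cs': "cs' = c' # cs''"
    by (cases cs') (auto simp: comps_def)
  let ?F = "forest_comps (c # cs) k"
  have red_c: "reduced c" "reduced c'"
    using Cons.prems(2,3) cs' by auto
  have "root_comp c k = root_comp c' k"
  proof (rule noncrossing_unique)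
    show "root_comp c k \<in> ?F" "root_comp c' k \<in> ?F"
      using Cons.prems(4) cs' by (auto simp: comps_def)
    show "noncrossing ?F"
      using reduced_forest_comps(1) Cons.prems(2) .
  qed (use root_comp_first_leaf red_c in blast)+
  then have "nleaves c = nleaves c'"
    using Max_root_comp[OF red_c(1), of k] Max_root_comp[OF red_c(2), of k] nleaves_pos[of c] nleaves_pos[of c']
    by simp
  then have union: "comps c k \<union> forest_comps cs (k + nleaves c) = comps c' k \<union> forest_comps cs'' (k + nleaves c)"
    using Cons.prems(4) cs' by simp
  have "support (comps c k) \<subseteq> {..<k + nleaves c}" "support (comps c' k) \<subseteq> {..<k + nleaves c}"
    using reduced_comps_invariant[OF red_c(1), of k] reduced_comps_invariant[OF red_c(2), of k]
      \<open>nleaves c = nleaves c'\<close> unfolding comps_invariant_def by auto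
  moreover have "support (forest_comps cs (k + nleaves c)) \<inter> {..<k + nleaves c} = {}"
    "support (forest_comps cs'' (k + nleaves c)) \<inter> {..<k + nleaves c} = {}"
    using reduced_forest_comps(2) Cons.prems(2,3) cs' by auto
  ultimately have "comps c k = comps c' k" "forest_comps cs (k + nleaves c) = forest_comps cs'' (k + nleaves c)"
    using union_eq_union_separated[OF union] by simp_all
  then have "c = c'" "cs = cs''"
    using Cons.prems(1)[of c c' k] red_c(2) Cons.IH[of cs'' "k + nleaves c"] Cons.prems(1-3) cs' by simp_all
  then show ?case
    using cs' by simp
qed

lemma comps_inj:
  assumes "reduced c" "reduced c'" "comps c k = comps c' k"
  shows "c = c'"
  using assms
proof (induction c arbitrary: c' k)
  case (Nd cs)
  obtain cs' where c': "c' = Nd cs'"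
    by (cases c')
  have root: "root_comp (Nd cs) k = root_comp c' k"
  proof (rule noncrossing_unique)
    show "root_comp (Nd cs) k \<in> comps c' k" "root_comp c' k \<in> comps c' k"
      using Nd.prems(3) by (auto simp: comps_def)
    show "noncrossing (comps c' k)"
      using noncrossing_comps[OF Nd.prems(2)] .
  qed (use root_comp_first_leaf Nd.prems(1,2) in blast)+
  show ?case
  proof (cases "cs = []")
    case True
    then have "cs' = []"
      using root c' root_comp_Nd_not_leaf by (metis comps_leaf(1))
    with True c' show ?thesis by simp
  next
    case False
    then obtain c1 mids cm where cs: "cs = c1 # mids @ [cm]"
      using Nd.prems(1) reduced_Nd_iff by blast
    have "cs' \<noteq> []"
      using root c' root_comp_Nd_not_leaf[OF False] by (metis comps_leaf(1))
    then obtain c1' mids' cm' where cs': "cs' = c1' # mids' @ [cm']"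
      using Nd.prems(2) c' reduced_Nd_iff by blast
    have red: "\<forall>c\<in>set cs. reduced c" "\<forall>c\<in>set cs'. reduced c"
      using Nd.prems(1,2) c' False \<open>cs' \<noteq> []\<close> by (simp_all add: list_all_iff)
    have "inner_comps c k = comps c k - {root_comp c k}" if "reduced c" for c
      using reduced_comps_invariant[OF that, of k] unfolding comps_invariant_def comps_def by auto
    then have "inner_comps (Nd cs) k = inner_comps c' k"
      using root Nd.prems by simp
    moreover have "root_comp c1 k = root_comp c1' k"
      "root_comp cm (k + nleavesl (c1 # mids)) = root_comp cm' (k + nleavesl (c1' # mids'))"
      using root unfolding c' cs cs' root_comp_Nd by simp_all
    ultimately have forest_eq: "forest_comps cs k = forest_comps cs' k"
      unfolding cs cs' c' forest_comps_children by simp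
    have "cs = cs'"
    proof (rule forest_comps_injI[OF _ red forest_eq])
      show "x = x'" if "x \<in> set cs" "reduced x'" "comps x k' = comps x' k'" for x x' k'
        using Nd.IH red(1) that by blast
    qed
    then show ?thesis
      using c' by simp
  qed
qed

lemma comps_of_split:
  assumes nc: "noncrossing A" "BNode L R \<in> A"
    and red: "\<forall>c\<in>set (c1 # mids @ [cm]). reduced c"
    and forest: "forest_comps (c1 # mids @ [cm]) k = insert L (insert R (A - {BNode L R}))"
    and first: "k \<in> leafset L" and last: "k + nleavesl (c1 # mids @ [cm]) - 1 \<in> leafset R"
  shows "comps (Nd (c1 # mids @ [cm])) k = A"
proof -
  define c k2 where "c = Nd (c1 # mids @ [cm])" and "k2 = k + nleavesl (c1 # mids)"
  let ?F = "forest_comps (c1 # mids @ [cm]) k"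
  have nc_F: "noncrossing ?F"
    using reduced_forest_comps(1)[OF red] .
  have red_c: "reduced c1" "reduced cm" "reduced c"
    using red by (auto simp: c_def list_all_iff)
  have rootL: "root_comp c1 k = L"
  proof (rule noncrossing_unique[OF nc_F])
    show "root_comp c1 k \<in> ?F"
      by (simp add: comps_def)
    show "L \<in> ?F"
      unfolding forest by simp
  qed (use root_comp_first_leaf[OF red_c(1)] first in blast)+
  have rootR: "root_comp cm k2 = R"
  proof (rule noncrossing_unique[OF nc_F])
    show "root_comp cm k2 \<in> ?F"
      by (simp add: forest_comps_append comps_def k2_def add.assoc)
    show "R \<in> ?F"
      unfolding forest by simp
    show "k2 + nleaves cm - 1 \<in> leafset (root_comp cm k2)"
      using root_comp_last_leaf[OF red_c(2)] .
    have "k2 + nleaves cm = k + nleavesl (c1 # mids @ [cm])"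
      by (simp add: k2_def)
    then show "k2 + nleaves cm - 1 \<in> leafset R"
      using last by (simp only:)
  qed
  have root: "root_comp c k = BNode L R"
    unfolding c_def root_comp_Nd k2_def[symmetric] by (simp only: rootL rootR)
  have F_eq: "?F = insert L (insert R (inner_comps c k))"
    unfolding c_def forest_comps_children k2_def[symmetric] by (simp only: rootL rootR)
  have "BNode L R \<in> comps c k"
    using root by (simp add: comps_def)
  then have "L \<notin> comps c k" "R \<notin> comps c k"
    using noncrossing_subtrees_notin[OF noncrossing_comps[OF red_c(3)]] by blast+
  then have "inner_comps c k = ?F - {L, R}"
    using F_eq unfolding comps_def by blast
  moreover have "L \<notin> A" "R \<notin> A"
    using noncrossing_subtrees_notin[OF nc] .
  then have "A - {BNode L R} = ?F - {L, R}"
    using forest by blast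
  ultimately have "inner_comps c k = A - {BNode L R}"
    by (simp only:)
  then show ?thesis
    using nc(2) unfolding c_def[symmetric] comps_def root by blast
qed

lemma forest_comps_inj:
  "\<forall>c\<in>set cs. reduced c \<Longrightarrow> \<forall>c\<in>set cs'. reduced c \<Longrightarrow> forest_comps cs k = forest_comps cs' k \<Longrightarrow> cs = cs'"
  using forest_comps_injI comps_inj by blast

text \<open>The two realizability statements are proved together by strong induction on N: a forest
  of size N needs a tree of size at most N for its first block, and a tree of size N needs
  forests and trees of smaller size for the blocks of its children.\<close>

definition tree_realizable :: "nat \<Rightarrow> bool" where
  "tree_realizable N \<longleftrightarrow> (\<forall>k A T0. noncrossing A \<longrightarrow> support A = {k..<k + N} \<longrightarrow> T0 \<in> A \<longrightarrow>
     k \<in> leafset T0 \<longrightarrow> k + N - 1 \<in> leafset T0 \<longrightarrow> (\<exists>c. reduced c \<and> nleaves c = N \<and> comps c k = A))"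

definition forest_realizable :: "nat \<Rightarrow> bool" where
  "forest_realizable N \<longleftrightarrow> (\<forall>k A. noncrossing A \<longrightarrow> support A = {k..<k + N} \<longrightarrow>
     (\<exists>cs. (\<forall>c\<in>set cs. reduced c) \<and> nleavesl cs = N \<and> forest_comps cs k = A))"

lemma tree_realizableD:
  "tree_realizable N \<Longrightarrow> noncrossing A \<Longrightarrow> support A = {k..<k + N} \<Longrightarrow> T0 \<in> A \<Longrightarrow>
     k \<in> leafset T0 \<Longrightarrow> k + N - 1 \<in> leafset T0 \<Longrightarrow> \<exists>c. reduced c \<and> nleaves c = N \<and> comps c k = A"
  unfolding tree_realizable_def by blast

lemma forest_realizableD:
  "forest_realizable N \<Longrightarrow> noncrossing A \<Longrightarrow> support A = {k..<k + N} \<Longrightarrow>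
     \<exists>cs. (\<forall>c\<in>set cs. reduced c) \<and> nleavesl cs = N \<and> forest_comps cs k = A"
  unfolding forest_realizable_def by blast

lemma realize_first_block:
  assumes nc: "noncrossing A" and supp: "support A = {k..<k + N}"
    and T0: "T0 \<in> A" "k \<in> leafset T0" and M: "M = Max (leafset T0)"
    and tree: "tree_realizable (M + 1 - k)" and forest: "forest_realizable (k + N - (M + 1))"
  obtains c rest where "reduced c" "\<forall>c\<in>set rest. reduced c" "nleaves c = M + 1 - k"
    "nleavesl (c # rest) = N" "forest_comps (c # rest) k = A"
proof -
  define A1 A2 where "A1 = {T\<in>A. leafset T \<subseteq> {k..M}}" and "A2 = {T\<in>A. leafset T \<subseteq> {M<..}}"
  note blocks = noncrossing_first_block_split[OF nc supp T0 M, folded A1_def A2_def]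
  have M_in: "M \<in> leafset T0"
    by (simp add: M)
  from T0(1) have "T0 \<in> A1 \<union> A2"
    by (simp only: blocks(1)[symmetric])
  moreover have "T0 \<notin> A2"
    using M_in unfolding A2_def by auto
  ultimately have "T0 \<in> A1"
    by blast
  have nc_blocks: "noncrossing A1" "noncrossing A2"
    unfolding A1_def A2_def by (rule noncrossing_subset[OF nc], blast)+
  have "support A1 = {k..<k + (M + 1 - k)}" "k + (M + 1 - k) - 1 = M"
    using blocks(2,4) by simp_all
  then obtain c where c: "reduced c" "nleaves c = M + 1 - k" "comps c k = A1"
    using tree_realizableD[OF tree nc_blocks(1) _ \<open>T0 \<in> A1\<close> T0(2)] M_in by metis
  have "M + 1 + (k + N - (M + 1)) = k + N"
    using blocks(5) by simp
  then have "support A2 = {M + 1..<M + 1 + (k + N - (M + 1))}"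
    using blocks(3) by (simp only:)
  then obtain rest where rest: "\<forall>c\<in>set rest. reduced c" "nleavesl rest = k + N - (M + 1)"
    "forest_comps rest (M + 1) = A2"
    using forest_realizableD[OF forest nc_blocks(2)] by blast
  show ?thesis
  proof
    show "forest_comps (c # rest) k = A"
      using c(2,3) rest(3) blocks(1,4) by simp
    show "nleavesl (c # rest) = N"
      using c(2) rest(2) blocks(4,5) by simp
  qed (use c rest in simp_all)
qed

lemma forest_realizable_step:
  assumes forest_IH: "\<And>m. m < N \<Longrightarrow> forest_realizable m"
    and tree_IH: "\<And>m. m \<le> N \<Longrightarrow> tree_realizable m"
  shows "forest_realizable N"
  unfolding forest_realizable_def
proof (intro allI impI)
  fix k A assume nc: "noncrossing A" and supp: "support A = {k..<k + N}"
  show "\<exists>cs. (\<forall>c\<in>set cs. reduced c) \<and> nleavesl cs = N \<and> forest_comps cs k = A"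
  proof (cases "N = 0")
    case True
    have "T \<notin> A" for T
      using True supp leafset_subset_support[of T A] by auto
    then show ?thesis
      using True by (intro exI[of _ "[]"]) auto
  next
    case False
    then have "k \<in> support A"
      using supp by simp
    then obtain T0 where T0: "T0 \<in> A" "k \<in> leafset T0"
      unfolding support_def by blast
    define M where "M = Max (leafset T0)"
    have "k \<le> M" "M < k + N"
      using noncrossing_first_block_split(4,5)[OF nc supp T0 M_def] .
    then have "tree_realizable (M + 1 - k)" "forest_realizable (k + N - (M + 1))"
      using tree_IH forest_IH False by simp_all
    then obtain c rest where "reduced c" "\<forall>c\<in>set rest. reduced c"
      "nleavesl (c # rest) = N" "forest_comps (c # rest) k = A"
      using realize_first_block[OF nc supp T0 M_def] by metis
    then show ?thesis
      by (intro exI[of _ "c # rest"]) simp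
  qed
qed

lemma first_leaf_in_left:
  assumes "sorted_wrt (<) (bleaves (BNode L R))" "leafset (BNode L R) \<subseteq> {k..}" "k \<in> leafset (BNode L R)"
  shows "k \<in> leafset L"
proof (rule ccontr)
  assume "k \<notin> leafset L"
  then have "k \<in> leafset R" using assms(3) by simp
  moreover obtain a where "a \<in> leafset L" using leafset_nonempty by blast
  ultimately show False
    using assms(1,2) unfolding sorted_BNode_iff by fastforce
qed

lemma last_leaf_in_right:
  assumes "sorted_wrt (<) (bleaves (BNode L R))" "leafset (BNode L R) \<subseteq> {..e}" "e \<in> leafset (BNode L R)"
  shows "e \<in> leafset R"
proof (rule ccontr)
  assume "e \<notin> leafset R"
  then have "e \<in> leafset L" using assms(3) by simp
  moreover obtain b where "b \<in> leafset R" using leafset_nonempty by blast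
  ultimately show False
    using assms(1,2) unfolding sorted_BNode_iff by fastforce
qed

lemma support_split:
  "BNode L R \<in> A \<Longrightarrow> support (insert L (insert R (A - {BNode L R}))) = support A"
  unfolding support_def by force

lemma realize_BNode:
  assumes IH: "\<And>m. m < N \<Longrightarrow> tree_realizable m \<and> forest_realizable m"
    and nc: "noncrossing A" and supp: "support A = {k..<k + N}" and T0: "BNode L R \<in> A"
    and first: "k \<in> leafset (BNode L R)" and last: "k + N - 1 \<in> leafset (BNode L R)"
  shows "\<exists>c. reduced c \<and> nleaves c = N \<and> comps c k = A"
proof -
  define A' where "A' = insert L (insert R (A - {BNode L R}))"
  have sorted: "sorted_wrt (<) (bleaves (BNode L R))"
    using noncrossing_sorted[OF nc T0] .
  have range: "leafset (BNode L R) \<subseteq> {k..<k + N}"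
    using leafset_subset_support[OF T0] supp by simp
  then have kL: "k \<in> leafset L" and lastR: "k + N - 1 \<in> leafset R"
    using first_leaf_in_left[OF sorted _ first] last_leaf_in_right[OF sorted _ last] by force+
  have nc': "noncrossing A'"
    unfolding A'_def using noncrossing_split[OF nc T0] .
  have supp': "support A' = {k..<k + N}"
    unfolding A'_def support_split[OF T0] supp ..
  have L: "L \<in> A'"
    unfolding A'_def by simp
  define x where "x = Max (leafset L)"
  have x_in: "x \<in> leafset L"
    by (simp add: x_def)
  have x_last: "x < k + N - 1"
    using sorted x_in lastR unfolding sorted_BNode_iff by blast
  have "k \<le> x"
    using noncrossing_first_block_split(4)[OF nc' supp' L kL x_def] .
  then have "x + 1 - k < N" "k + N - (x + 1) < N"
    using x_last by arith+
  then have "tree_realizable (x + 1 - k)" "forest_realizable (k + N - (x + 1))"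
    using IH by blast+
  then obtain c1 rest where c1: "reduced c1" "nleaves c1 = x + 1 - k" and rest: "\<forall>c\<in>set rest. reduced c"
    and nl: "nleavesl (c1 # rest) = N" and forest: "forest_comps (c1 # rest) k = A'"
    using realize_first_block[OF nc' supp' L kL x_def] by metis
  have "rest \<noteq> []"
    using nl c1(2) x_last \<open>k \<le> x\<close> by auto
  then obtain mids cm where rest_eq: "rest = mids @ [cm]"
    by (metis rev_exhaust)
  have red: "\<forall>c\<in>set (c1 # mids @ [cm]). reduced c"
    using c1(1) rest unfolding rest_eq by simp
  have "comps (Nd (c1 # mids @ [cm])) k = A"
    using comps_of_split[OF nc T0 red _ kL] forest lastR nl unfolding rest_eq A'_def by simp
  moreover have "reduced (Nd (c1 # mids @ [cm]))"
    using red unfolding reduced_Nd_iff by blast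
  moreover have "nleaves (Nd (c1 # mids @ [cm])) = N"
    using nl unfolding rest_eq by (simp add: nleaves_Nd del: nleaves.simps)
  ultimately show ?thesis
    by blast
qed

lemma tree_realizable_step:
  assumes IH: "\<And>m. m < N \<Longrightarrow> tree_realizable m \<and> forest_realizable m"
  shows "tree_realizable N"
  unfolding tree_realizable_def
proof (intro allI impI)
  fix k A T0
  assume nc: "noncrossing A" and supp: "support A = {k..<k + N}" and T0: "T0 \<in> A"
    and first: "k \<in> leafset T0" and last: "k + N - 1 \<in> leafset T0"
  show "\<exists>c. reduced c \<and> nleaves c = N \<and> comps c k = A"
  proof (cases T0)
    case (BLeaf a)
    have "0 < N"
      using leafset_subset_support[OF T0] first supp by auto
    with BLeaf first last have N: "N = 1" and T0_eq: "T0 = BLeaf k"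
      by auto
    have "T = T0" if "T \<in> A" for T
    proof -
      obtain b where "b \<in> leafset T"
        using leafset_nonempty by blast
      moreover have "leafset T \<subseteq> {k}"
        using leafset_subset_support[OF that] supp N by simp
      ultimately show ?thesis
        using noncrossing_unique[OF nc that T0 _ first] by blast
    qed
    then have "A = {BLeaf k}"
      using T0 T0_eq by blast
    with N show ?thesis
      by (intro exI[of _ "Nd []"]) simp
  next
    case (BNode L R)
    then show ?thesis
      using realize_BNode[OF IH nc supp] T0 first last by blast
  qed
qed

lemma realizable: "tree_realizable N \<and> forest_realizable N"
proof (induction N rule: less_induct)
  case (less N)
  then have "tree_realizable N"
    using tree_realizable_step by blast
  with less show ?case
    using forest_realizable_step le_neq_implies_less by blast
qed

lemma PST_iff:
  assumes "1 \<le> n"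
  shows "t \<in> PST n \<longleftrightarrow> (\<exists>cs. t = Nd (cs @ [Nd []]) \<and> (\<forall>c\<in>set cs. reduced c) \<and> nleavesl cs = n)"
proof
  assume "t \<in> PST n"
  then have red: "reduced t" and prime: "prime_tree t" and w: "weight t = n"
    by (auto simp: PST_def)
  obtain ds where t: "t = Nd ds"
    by (cases t)
  have ds: "ds \<noteq> []" "last ds = Nd []"
    using prime t by (auto simp: prime_tree_def)
  then have ds_eq: "ds = butlast ds @ [Nd []]"
    by (metis append_butlast_last_id)
  have "\<forall>c\<in>set (butlast ds). reduced c"
    using red t ds(1) by (auto simp: list_all_iff dest: in_set_butlastD)
  moreover have "nleavesl (butlast ds) = n"
  proof -
    have "nleavesl ds = nleavesl (butlast ds) + 1"
      by (subst (1) ds_eq) simp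
    then show ?thesis
      using w t nleaves_Nd[OF ds(1)] unfolding weight_def by simp
  qed
  ultimately show "\<exists>cs. t = Nd (cs @ [Nd []]) \<and> (\<forall>c\<in>set cs. reduced c) \<and> nleavesl cs = n"
    using t ds_eq by blast
next
  assume "\<exists>cs. t = Nd (cs @ [Nd []]) \<and> (\<forall>c\<in>set cs. reduced c) \<and> nleavesl cs = n"
  then obtain cs where t: "t = Nd (cs @ [Nd []])" and red: "\<forall>c\<in>set cs. reduced c" and n: "nleavesl cs = n"
    by blast
  have "cs \<noteq> []"
    using n assms by auto
  then have "reduced t"
    using red unfolding t by (cases cs) (auto simp: list_all_iff)
  moreover have "nleaves t = n + 1"
    using n unfolding t by (simp add: nleaves_Nd del: nleaves.simps(2))
  ultimately show "t \<in> PST n"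
    using assms unfolding PST_def prime_tree_def weight_def t by simp
qed

lemma inj_on_phi_PST:
  assumes "1 \<le> n"
  shows "inj_on phi (PST n)"
proof (rule inj_onI)
  fix t t' assume "t \<in> PST n" "t' \<in> PST n" and eq: "phi t = phi t'"
  then obtain cs cs' where "t = Nd (cs @ [Nd []])" "\<forall>c\<in>set cs. reduced c"
    "t' = Nd (cs' @ [Nd []])" "\<forall>c\<in>set cs'. reduced c"
    using PST_iff[OF assms] by meson
  with eq show "t = t'"
    using forest_comps_inj by (simp add: phi_eq_forest_comps)
qed

lemma phi_PST_subset_Arr:
  assumes "1 \<le> n"
  shows "phi ` PST n \<subseteq> Arr n"
proof
  fix A assume "A \<in> phi ` PST n"
  then obtain t where "t \<in> PST n" "A = phi t"
    by blast
  then obtain cs where "\<forall>c\<in>set cs. reduced c" "nleavesl cs = n" "A = forest_comps cs 1"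
    using PST_iff[OF assms] phi_eq_forest_comps by metis
  then have "noncrossing A" "support A = {1..n}"
    using reduced_forest_comps[of cs 1] by auto
  then show "A \<in> Arr n"
    unfolding Arr_def arrangement_iff_noncrossing by simp
qed

lemma Arr_subset_phi_PST:
  assumes "1 \<le> n"
  shows "Arr n \<subseteq> phi ` PST n"
proof
  fix A assume "A \<in> Arr n"
  then have "noncrossing A" "support A = {1..<1 + n}"
    by (auto simp: Arr_def arrangement_iff_noncrossing)
  then obtain cs where "\<forall>c\<in>set cs. reduced c" "nleavesl cs = n" "forest_comps cs 1 = A"
    using forest_realizableD realizable by blast
  then have "Nd (cs @ [Nd []]) \<in> PST n" "phi (Nd (cs @ [Nd []])) = A"
    using PST_iff[OF assms] phi_eq_forest_comps by auto
  then show "A \<in> phi ` PST n"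
    by (metis image_eqI)
qed

theorem mainTheorem4:
  fixes n :: nat
  assumes "1 \<le> n"
  shows "bij_betw phi (PST n) (Arr n)"
proof (rule bij_betw_imageI)
  show "inj_on phi (PST n)"
    using inj_on_phi_PST[OF assms] .
  show "phi ` PST n = Arr n"
    using phi_PST_subset_Arr[OF assms] Arr_subset_phi_PST[OF assms] by (rule subset_antisym)
qed

end
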